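(* Let $p$ be a prime, let $f\ge1$, and let $q\ge1$ be a power of $p$. For $0\le i\le p^f-2$ and $0\le r\le q-1$ let $A_{i,r}=\{m\ge0: m\equiv i\pmod{p^f-1},\ m\equiv r\pmod q\}$. Let $s(n)_{n\ge0}$ be a sequence of $p$-adic integers with an approximate twisted interpolation $\{(s_{i,r},A_{i,r}):0\le i\le p^f-2,\ 0\le r\le q-1\}$. Then $$\lim_{\alpha\to\infty}\frac{|\{s(n)\bmod p^\alpha:n\ge0\}|}{p^\alpha}=\mu\Big(\mathbb{Z}_p\cap\bigcup_{i,r}s_{i,r}(r+q\mathbb{Z}_p)\Big).$$
   Context: Here each $s_{i,r}:\mathbb{Z}_p\to K$ is continuous, $K$ a finite extension of $\mathbb{Q}_p$ with the unique absolute value $|\cdot|_p$ extending the $p$-adic one, and "approximate twisted interpolation" means there are constants $C\ge0$, $0\le D<1$ with $|s(n)-s_{i,r}(n)|_p\le CD^n$ for all $n\in A_{i,r}$ and all $i,r$. $\mathbb{Z}_p$ is regarded as a subset of $K$. $\mu$ is the Haar measure on $\mathbb{Z}_p$ normalized by $\mu(m+p^\alpha\mathbb{Z}_p)=p^{-\alpha}$. *)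

theory Defs
  imports "HOL-Analysis.Analysis" "HOL-Probability.Probability"
begin

text \<open>p-adic integers, represented as compatible systems of residues:
  x k is the residue of x modulo p^k, taken in {0..<p^k}.\<close>

definition zp :: "nat \<Rightarrow> (nat \<Rightarrow> int) set" where
  "zp p = {x. \<forall>k. 0 \<le> x k \<and> x k < int p ^ k \<and> x (Suc k) mod (int p ^ k) = x k}"

definition zp_of_nat :: "nat \<Rightarrow> nat \<Rightarrow> (nat \<Rightarrow> int)" where
  "zp_of_nat p n = (\<lambda>k. int n mod (int p ^ k))"

definition zp_add :: "nat \<Rightarrow> (nat \<Rightarrow> int) \<Rightarrow> (nat \<Rightarrow> int) \<Rightarrow> (nat \<Rightarrow> int)" where
  "zp_add p x y = (\<lambda>k. (x k + y k) mod (int p ^ k))"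

definition zp_mul :: "nat \<Rightarrow> (nat \<Rightarrow> int) \<Rightarrow> (nat \<Rightarrow> int) \<Rightarrow> (nat \<Rightarrow> int)" where
  "zp_mul p x y = (\<lambda>k. (x k * y k) mod (int p ^ k))"

definition padic_abs :: "nat \<Rightarrow> (nat \<Rightarrow> int) \<Rightarrow> real" where
  "padic_abs p x = (if (\<forall>k. x k = 0) then 0
                    else inverse (real p ^ (LEAST k. x (Suc k) \<noteq> 0)))"

definition zp_ball :: "nat \<Rightarrow> (nat \<Rightarrow> int) \<Rightarrow> nat \<Rightarrow> (nat \<Rightarrow> int) set" where
  "zp_ball p m a = {x \<in> zp p. x a = m a}"

definition zp_coset :: "nat \<Rightarrow> nat \<Rightarrow> nat \<Rightarrow> (nat \<Rightarrow> int) set" where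
  "zp_coset p r q = {zp_add p (zp_of_nat p r) (zp_mul p (zp_of_nat p q) z) | z. z \<in> zp p}"

definition zp_continuous :: "nat \<Rightarrow> ('k::field \<Rightarrow> real) \<Rightarrow> ((nat \<Rightarrow> int) \<Rightarrow> 'k) \<Rightarrow> bool" where
  "zp_continuous p absK g \<longleftrightarrow>
     (\<forall>x\<in>zp p. \<forall>\<epsilon>>0. \<exists>a. \<forall>y\<in>zp p. y a = x a \<longrightarrow> absK (g y - g x) < \<epsilon>)"

text \<open>K is a finite extension of Q_p, where Z_p is embedded in K via iota
  (an additive and multiplicative map sending 1 to 1), and absK is an absolute value
  on K extending the p-adic one (hence the unique such extension).\<close>
definition padic_extension :: "nat \<Rightarrow> ((nat \<Rightarrow> int) \<Rightarrow> 'k::field) \<Rightarrow> ('k \<Rightarrow> real) \<Rightarrow> bool" where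
  "padic_extension p iota absK \<longleftrightarrow>
     (\<forall>x\<in>zp p. \<forall>y\<in>zp p. iota (zp_add p x y) = iota x + iota y) \<and>
     (\<forall>x\<in>zp p. \<forall>y\<in>zp p. iota (zp_mul p x y) = iota x * iota y) \<and>
     iota (zp_of_nat p 1) = 1 \<and>
     (\<forall>z. absK z \<ge> 0 \<and> (absK z = 0 \<longleftrightarrow> z = 0)) \<and>
     (\<forall>z w. absK (z * w) = absK z * absK w) \<and>
     (\<forall>z w. absK (z + w) \<le> absK z + absK w) \<and>
     (\<forall>x\<in>zp p. absK (iota x) = padic_abs p x) \<and>
     (\<exists>B. finite B \<and> (\<forall>z. \<exists>c. (\<forall>b\<in>B. \<exists>u\<in>zp p. \<exists>v\<in>zp p. v \<noteq> zp_of_nat p 0 \<and> c b = iota u / iota v)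
                              \<and> z = (\<Sum>b\<in>B. c b * b)))"

end

theory Submission
  imports Defs "HOL-Number_Theory.Number_Theory"
begin

text \<open>The closure S of the sequence in Z_p is the intersection of the decreasing sets U_a of points
  whose residue mod p^a is attained by the sequence; U_a is a disjoint union of
  card {s(n) mod p^a} balls of measure p^-a, so the quotients tend to the measure of S. It remains
  to see that S differs from the union T of the sets s_{i,r}(r + q Z_p) by a null set.
  Since p^f - 1 is prime to p, the Chinese remainder theorem makes every class A_{i,r} p-adically
  dense in r + q Z_p, so by the approximate interpolation each value s_{i,r}(y) is a limit of
  terms of the sequence: T is contained in S. Conversely, a point of S that is not a term of the
  sequence is the limit of infinitely many terms; infinitely many of their indices lie in one
  class A_{i,r}, and by compactness these indices accumulate at some y in r + q Z_p, whence the
  point equals s_{i,r}(y). So S - T is countable, hence null.\<close>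

lemma zp_memD: "x \<in> zp p \<Longrightarrow> 0 \<le> x k \<and> x k < int p ^ k \<and> x (Suc k) mod int p ^ k = x k"
  by (simp add: zp_def)

lemma zpI:
  assumes "\<And>k. 0 \<le> x k" "\<And>k. x k < int p ^ k" "\<And>k. x (Suc k) mod int p ^ k = x k"
  shows "x \<in> zp p"
  using assms by (simp add: zp_def)

lemma zp_mod_eq:
  assumes x: "x \<in> zp p" and "j \<le> k"
  shows "x k mod int p ^ j = x j"
  using assms(2)
proof (induction k)
  case 0
  then show ?case using zp_memD[OF x, of 0] by simp
next
  case (Suc k)
  show ?case
  proof (cases "j = Suc k")
    case True
    then show ?thesis using zp_memD[OF x, of "Suc k"] by simp
  next
    case False
    then have "j \<le> k" using Suc by simp
    then have "int p ^ j dvd int p ^ k" by (simp add: le_imp_power_dvd)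
    then have "x (Suc k) mod int p ^ j = (x (Suc k) mod int p ^ k) mod int p ^ j"
      by (simp add: mod_mod_cancel)
    then show ?thesis using zp_memD[OF x, of k] Suc.IH[OF \<open>j \<le> k\<close>] by simp
  qed
qed

lemma zp_at_0: "x \<in> zp p \<Longrightarrow> x 0 = 0"
  using zp_memD[of x p 0] by simp

definition zp_neg :: "nat \<Rightarrow> (nat \<Rightarrow> int) \<Rightarrow> (nat \<Rightarrow> int)" where
  "zp_neg p x = (\<lambda>k. (- x k) mod int p ^ k)"

context
  fixes p :: nat
  assumes p: "0 < p"
begin

lemma zp_residue_in_zp:
  assumes "\<And>k. u (Suc k) mod int p ^ k = u k mod int p ^ k"
  shows "(\<lambda>k. u k mod int p ^ k) \<in> zp p"
proof (rule zpI)
  fix k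
  have "int p ^ k dvd int p ^ Suc k" by simp
  then show "u (Suc k) mod int p ^ Suc k mod int p ^ k = u k mod int p ^ k"
    using assms by (simp add: mod_mod_cancel)
qed (use p in simp_all)

lemma zp_of_nat_in_zp: "zp_of_nat p n \<in> zp p"
  unfolding zp_of_nat_def by (rule zp_residue_in_zp) simp

lemma zp_add_in_zp: "x \<in> zp p \<Longrightarrow> y \<in> zp p \<Longrightarrow> zp_add p x y \<in> zp p"
  unfolding zp_add_def
  by (rule zp_residue_in_zp) (metis mod_add_eq zp_memD)

lemma zp_mul_in_zp: "x \<in> zp p \<Longrightarrow> y \<in> zp p \<Longrightarrow> zp_mul p x y \<in> zp p"
  unfolding zp_mul_def
  by (rule zp_residue_in_zp) (metis mod_mult_eq zp_memD)

lemma zp_neg_in_zp: "x \<in> zp p \<Longrightarrow> zp_neg p x \<in> zp p"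
  unfolding zp_neg_def
  by (rule zp_residue_in_zp) (metis mod_minus_eq zp_memD)

end

lemma zp_add_neg_self: "zp_add p x (zp_neg p x) = zp_of_nat p 0"
  unfolding zp_add_def zp_neg_def zp_of_nat_def by (rule ext) (simp add: mod_add_right_eq)

lemma zp_add_neg_apply: "zp_add p x (zp_neg p y) k = (x k - y k) mod int p ^ k"
  unfolding zp_add_def zp_neg_def by (simp add: mod_add_right_eq)

lemma zp_add_zero_zero: "zp_add p (zp_of_nat p 0) (zp_of_nat p 0) = zp_of_nat p 0"
  unfolding zp_add_def zp_of_nat_def by simp

lemma padic_abs_le_if_zero:
  assumes p: "0 < p" and d: "d \<in> zp p" and dk: "d k = 0"
  shows "padic_abs p d \<le> inverse (real p ^ k)"
proof (cases "\<forall>j. d j = 0")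
  case True
  then show ?thesis by (simp add: padic_abs_def)
next
  case False
  then obtain m where m: "d m \<noteq> 0" by auto
  with zp_at_0[OF d] obtain j where "d (Suc j) \<noteq> 0" by (cases m) auto
  define v where "v = (LEAST j. d (Suc j) \<noteq> 0)"
  have v: "d (Suc v) \<noteq> 0" unfolding v_def by (rule LeastI) fact
  have "k \<le> v"
  proof (rule ccontr)
    assume "\<not> k \<le> v"
    then have "d k mod int p ^ Suc v = d (Suc v)" by (intro zp_mod_eq[OF d]) simp
    with dk v show False by simp
  qed
  then have "real p ^ k \<le> real p ^ v" using p by (intro power_increasing) auto
  then have "inverse (real p ^ v) \<le> inverse (real p ^ k)" using p by (intro le_imp_inverse_le) auto
  then show ?thesis using False by (simp add: padic_abs_def v_def)
qed

lemma zero_if_padic_abs_less: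
  assumes p: "0 < p" and d: "d \<in> zp p" and lt: "padic_abs p d < inverse (real p ^ k)"
  shows "d k = 0"
proof (rule ccontr)
  assume dk: "d k \<noteq> 0"
  with zp_at_0[OF d] obtain j where kj: "k = Suc j" by (cases k) auto
  define v where "v = (LEAST j. d (Suc j) \<noteq> 0)"
  have "v \<le> j" unfolding v_def by (rule Least_le) (use dk kj in simp)
  then have "real p ^ v \<le> real p ^ k" using p kj by (intro power_increasing) auto
  then have "inverse (real p ^ k) \<le> inverse (real p ^ v)" using p by (intro le_imp_inverse_le) auto
  moreover have "padic_abs p d = inverse (real p ^ v)"
    using dk unfolding padic_abs_def v_def by auto
  ultimately show False using lt by simp
qed

lemma padic_extension_absD:
  assumes "padic_extension p iota absK"
  shows "absK z \<ge> 0" "absK z = 0 \<longleftrightarrow> z = 0" "absK (z + w) \<le> absK z + absK w"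
    "x \<in> zp p \<Longrightarrow> absK (iota x) = padic_abs p x"
  using assms by (simp_all add: padic_extension_def)

lemma padic_extension_iota_add:
  "padic_extension p iota absK \<Longrightarrow> x \<in> zp p \<Longrightarrow> y \<in> zp p \<Longrightarrow> iota (zp_add p x y) = iota x + iota y"
  by (simp add: padic_extension_def)

context
  fixes p :: nat and iota :: "(nat \<Rightarrow> int) \<Rightarrow> 'k::field" and absK :: "'k \<Rightarrow> real"
  assumes p: "0 < p" and K: "padic_extension p iota absK"
begin

lemma abs_triangle_diff: "absK (a - c) \<le> absK (a - b) + absK (b - c)"
  using padic_extension_absD(3)[OF K, of "a - b" "b - c"] by simp

lemma eq_if_abs_diff_small:
  assumes "\<And>e. e > 0 \<Longrightarrow> absK (a - b) < e"
  shows "a = b"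
  using assms[of "absK (a - b)"] padic_extension_absD(1,2)[OF K, of "a - b"]
  by (metis eq_iff_diff_eq_0 less_irrefl order_le_less)

lemma iota_diff:
  assumes a: "a \<in> zp p" and b: "b \<in> zp p"
  shows "iota a - iota b = iota (zp_add p a (zp_neg p b))"
proof -
  note iota_add = padic_extension_iota_add[OF K]
  have zero: "zp_of_nat p 0 \<in> zp p" and nb: "zp_neg p b \<in> zp p"
    using p b by (simp_all add: zp_of_nat_in_zp zp_neg_in_zp)
  have "iota (zp_of_nat p 0) = 0"
    using iota_add[OF zero zero] by (metis zp_add_zero_zero add_left_cancel add.right_neutral)
  then have "iota b + iota (zp_neg p b) = 0"
    using iota_add[OF b nb] by (simp add: zp_add_neg_self)
  then have "iota (zp_neg p b) = - iota b" by (simp add: eq_neg_iff_add_eq_0 add.commute)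
  then show ?thesis using iota_add[OF a nb] by simp
qed

lemma abs_iota_diff_le:
  assumes a: "a \<in> zp p" and b: "b \<in> zp p" and ab: "a k = b k"
  shows "absK (iota a - iota b) \<le> inverse (real p ^ k)"
proof -
  have d: "zp_add p a (zp_neg p b) \<in> zp p" using p a b by (simp add: zp_add_in_zp zp_neg_in_zp)
  have "zp_add p a (zp_neg p b) k = 0" using ab by (simp add: zp_add_neg_apply)
  then have "padic_abs p (zp_add p a (zp_neg p b)) \<le> inverse (real p ^ k)"
    by (rule padic_abs_le_if_zero[OF p d])
  then show ?thesis by (simp add: iota_diff[OF a b] padic_extension_absD(4)[OF K d])
qed

lemma eq_if_abs_iota_diff_less:
  assumes a: "a \<in> zp p" and b: "b \<in> zp p" and lt: "absK (iota a - iota b) < inverse (real p ^ k)"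
  shows "a k = b k"
proof -
  have d: "zp_add p a (zp_neg p b) \<in> zp p" using p a b by (simp add: zp_add_in_zp zp_neg_in_zp)
  have "padic_abs p (zp_add p a (zp_neg p b)) < inverse (real p ^ k)"
    using lt by (simp add: iota_diff[OF a b] padic_extension_absD(4)[OF K d])
  then have "(a k - b k) mod int p ^ k = 0"
    using zero_if_padic_abs_less[OF p d] by (simp add: zp_add_neg_apply)
  then have "a k mod int p ^ k = b k mod int p ^ k" by (simp add: mod_eq_dvd_iff dvd_eq_mod_eq_0)
  then show ?thesis using zp_memD[OF a, of k] zp_memD[OF b, of k] by simp
qed

end

lemma decreasing_infinite_pigeonhole:
  fixes F :: "nat \<Rightarrow> 'a set" and G :: "'b \<Rightarrow> 'a set"
  assumes dec: "\<And>k. F (Suc k) \<subseteq> F k" and inf: "\<And>k. infinite (F k)" and fin: "finite I"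
    and cov: "\<And>k. F k \<subseteq> (\<Union>j\<in>I. G j)"
  shows "\<exists>j\<in>I. \<forall>k. infinite (F k \<inter> G j)"
proof (rule ccontr)
  assume "\<not> ?thesis"
  then obtain kf where kf: "\<And>j. j \<in> I \<Longrightarrow> finite (F (kf j) \<inter> G j)" by metis
  define K where "K = (\<Sum>j\<in>I. kf j)"
  have "kf j \<le> K" if "j \<in> I" for j
    unfolding K_def using fin that by (intro member_le_sum) auto
  then have "F K \<subseteq> F (kf j)" if "j \<in> I" for j
    using lift_Suc_antimono_le[of F, OF dec] that by blast
  then have "finite (F K \<inter> G j)" if "j \<in> I" for j
    using kf[OF that] that by (meson Int_mono finite_subset order_refl)
  then have "finite (\<Union>j\<in>I. F K \<inter> G j)" using fin by blast
  moreover have "F K = (\<Union>j\<in>I. F K \<inter> G j)" using cov[of K] by auto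
  ultimately show False using inf[of K] by simp
qed

text \<open>Koenig's lemma on the tree of residues, i.e. compactness of Z_p.\<close>

lemma exists_zp_cluster_point:
  fixes F :: "nat \<Rightarrow> nat set"
  assumes p: "0 < p" and dec: "\<And>k. F (Suc k) \<subseteq> F k" and inf: "\<And>k. infinite (F k)"
  shows "\<exists>y\<in>zp p. \<forall>k b. infinite {n\<in>F k. int n mod int p ^ b = y b}"
proof -
  define P where "P = (\<lambda>b (u::int). 0 \<le> u \<and> u < int p ^ b \<and> (\<forall>k. infinite {n\<in>F k. int n mod int p ^ b = u}))"
  have step: "\<exists>v. P (Suc b) v \<and> v mod int p ^ b = u" if Pu: "P b u" for b u
  proof -
    define F' where "F' = (\<lambda>k. {n\<in>F k. int n mod int p ^ b = u})"
    have pp: "(0::int) < int p ^ Suc b" using p by simp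
    have "\<exists>v\<in>{0..<int p ^ Suc b}. \<forall>k. infinite (F' k \<inter> {n. int n mod int p ^ Suc b = v})"
    proof (rule decreasing_infinite_pigeonhole)
      show "F' (Suc k) \<subseteq> F' k" for k using dec by (auto simp: F'_def)
      show "infinite (F' k)" for k using Pu by (simp add: P_def F'_def)
      show "F' k \<subseteq> (\<Union>v\<in>{0..<int p ^ Suc b}. {n. int n mod int p ^ Suc b = v})" for k
        using pos_mod_sign[OF pp] pos_mod_bound[OF pp] by auto
    qed simp
    then obtain v where v: "v \<in> {0..<int p ^ Suc b}"
      and vi: "\<And>k. infinite (F' k \<inter> {n. int n mod int p ^ Suc b = v})" by blast
    obtain n where n: "n \<in> F' 0 \<inter> {n. int n mod int p ^ Suc b = v}"
      using vi[of 0] by (metis finite.emptyI ex_in_conv)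
    have dv: "int p ^ b dvd int p ^ Suc b" by simp
    have vu: "v mod int p ^ b = u"
      using n mod_mod_cancel[OF dv, of "int n"] by (auto simp: F'_def)
    have "F' k \<inter> {n. int n mod int p ^ Suc b = v} = {n\<in>F k. int n mod int p ^ Suc b = v}" for k
      using mod_mod_cancel[OF dv] vu by (auto simp: F'_def)
    then show ?thesis using v vi vu by (auto simp: P_def)
  qed
  define y where "y = rec_nat 0 (\<lambda>b u. SOME v. P (Suc b) v \<and> v mod int p ^ b = u)"
  have y_Suc: "P (Suc b) (y (Suc b)) \<and> y (Suc b) mod int p ^ b = y b" if "P b (y b)" for b
    using someI_ex[OF step[OF that]] by (simp add: y_def)
  have "P b (y b)" for b
    by (induction b) (use inf y_Suc in \<open>simp_all add: y_def P_def\<close>)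
  with y_Suc have Py: "P b (y b) \<and> y (Suc b) mod int p ^ b = y b" for b by blast
  then have "y \<in> zp p" by (auto simp: zp_def P_def)
  with Py show ?thesis by (auto simp: P_def)
qed

lemma int_mod_power_lower:
  assumes y: "y \<in> zp p" and "j \<le> k" and "int n mod int p ^ k = y k"
  shows "int n mod int p ^ j = y j"
proof -
  have "int p ^ j dvd int p ^ k" using \<open>j \<le> k\<close> by (simp add: le_imp_power_dvd)
  then show ?thesis using assms zp_mod_eq[OF y \<open>j \<le> k\<close>] by (metis mod_mod_cancel)
qed

lemma zp_coset_iff:
  assumes p: "0 < p" and q: "q = p ^ e" and r: "r < q"
  shows "y \<in> zp_coset p r q \<longleftrightarrow> y \<in> zp p \<and> y e = int r"
proof
  assume "y \<in> zp_coset p r q"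
  then obtain z where z: "z \<in> zp p" and yz: "y = zp_add p (zp_of_nat p r) (zp_mul p (zp_of_nat p q) z)"
    unfolding zp_coset_def by auto
  have "y \<in> zp p" unfolding yz using p z by (simp add: zp_add_in_zp zp_mul_in_zp zp_of_nat_in_zp)
  moreover have "y e = int r mod int q" using q by (simp add: yz zp_add_def zp_mul_def zp_of_nat_def)
  ultimately show "y \<in> zp p \<and> y e = int r" using r by simp
next
  assume "y \<in> zp p \<and> y e = int r"
  then have y: "y \<in> zp p" and ye: "y e = int r" by auto
  have qpos: "int q > 0" using q p by simp
  \<comment> \<open>the digits of y beyond the e-th one, read as an element of Z_p\<close>
  define w where "w = (\<lambda>k. (y (k + e) - int r) div int q)"
  have wq: "y (k + e) = int r + int q * w k" for k
  proof -
    have "y (k + e) mod int q = int r" using zp_mod_eq[OF y, of e "k + e"] ye q by simp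
    then have "int q dvd y (k + e) - int r" by (simp add: mod_eq_dvd_iff[symmetric] r)
    then show ?thesis unfolding w_def by simp
  qed
  define z where "z = (\<lambda>k. w k mod int p ^ k)"
  have z: "z \<in> zp p"
    unfolding z_def
  proof (rule zp_residue_in_zp[OF p])
    fix k
    have "y (Suc k + e) mod int p ^ (k + e) = y (k + e) mod int p ^ (k + e)"
      using zp_mod_eq[OF y, of "k + e" "Suc k + e"] zp_mod_eq[OF y, of "k + e" "k + e"] by simp
    then have "int p ^ (k + e) dvd y (Suc k + e) - y (k + e)" by (simp add: mod_eq_dvd_iff)
    then have "int q * int p ^ k dvd int q * (w (Suc k) - w k)"
      using wq[of "Suc k"] wq[of k] by (simp add: q power_add algebra_simps)
    then have "int p ^ k dvd w (Suc k) - w k" using qpos by simp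
    then show "w (Suc k) mod int p ^ k = w k mod int p ^ k" by (simp add: mod_eq_dvd_iff)
  qed
  have "y = zp_add p (zp_of_nat p r) (zp_mul p (zp_of_nat p q) z)"
  proof
    fix k
    have "zp_add p (zp_of_nat p r) (zp_mul p (zp_of_nat p q) z) k = (int r + int q * w k) mod int p ^ k"
      by (simp add: zp_add_def zp_mul_def zp_of_nat_def z_def) (metis mod_add_eq mod_mult_eq)
    also have "\<dots> = y k" using wq[of k] zp_mod_eq[OF y, of k "k + e"] by simp
    finally show "y k = zp_add p (zp_of_nat p r) (zp_mul p (zp_of_nat p q) z) k" by simp
  qed
  with z show "y \<in> zp_coset p r q" unfolding zp_coset_def by auto
qed

lemma infinite_chinese_remainder_nat:
  fixes m n :: nat
  assumes "coprime m n" "0 < m" "0 < n"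
  shows "infinite {x. [x = a] (mod m) \<and> [x = b] (mod n)}"
proof -
  obtain x0 where x0: "[x0 = a] (mod m)" "[x0 = b] (mod n)"
    using binary_chinese_remainder_nat[OF assms(1)] by blast
  have "[x0 + k * (m * n) = x0] (mod m)" "[x0 + k * (m * n) = x0] (mod n)" for k
    unfolding cong_def by (metis mod_mult_self2 mult.assoc mult.commute)+
  then have "range (\<lambda>k. x0 + k * (m * n)) \<subseteq> {x. [x = a] (mod m) \<and> [x = b] (mod n)}"
    using x0 by (auto intro: cong_trans)
  moreover have "inj (\<lambda>k. x0 + k * (m * n))" using assms by (intro injI) simp
  ultimately show ?thesis using range_inj_infinite infinite_super by blast
qed

lemma infinite_residue_class_in_ball:
  assumes p: "0 < p" and f: "1 \<le> f" and i: "i < p ^ f - 1" and y: "y \<in> zp p"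
  shows "infinite {n. n mod (p ^ f - 1) = i \<and> int n mod int p ^ b = y b}"
proof -
  define m where "m = p ^ f - 1"
  have "coprime m (p ^ f)" unfolding m_def using p by (intro coprime_diff_one_left_nat) simp
  moreover have "p dvd p ^ f" using f by (simp add: dvd_power)
  ultimately have "coprime m (p ^ b)" by (meson coprime_divisors coprime_power_right_iff dvd_refl)
  then have inf: "infinite {n. [n = i] (mod m) \<and> [n = nat (y b)] (mod p ^ b)}"
    using i p by (intro infinite_chinese_remainder_nat) (simp_all add: m_def)
  have "0 \<le> y b" "y b < int p ^ b" using zp_memD[OF y] by auto
  then have "[n = nat (y b)] (mod p ^ b) \<Longrightarrow> int n mod int p ^ b = y b" for n
    unfolding cong_def by (metis int_nat_eq mod_less of_nat_mod of_nat_power nat_less_iff)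
  moreover have "[n = i] (mod m) \<Longrightarrow> n mod m = i" for n using i by (simp add: cong_def m_def)
  ultimately show ?thesis using inf unfolding m_def by (rule_tac infinite_super) auto
qed

definition zp_seq_closure :: "nat \<Rightarrow> (nat \<Rightarrow> nat \<Rightarrow> int) \<Rightarrow> (nat \<Rightarrow> int) set" where
  "zp_seq_closure p s = {x \<in> zp p. \<forall>a. \<exists>n. x a = s n a}"

lemma exists_in_infinite_eventually:
  fixes S :: "nat set"
  assumes "infinite S" and "eventually P sequentially"
  shows "\<exists>n\<in>S. P n"
  using assms unfolding cofinite_eq_sequentially[symmetric] eventually_cofinite
  by (metis (mono_tags, lifting) finite_subset mem_Collect_eq subsetI)

lemma geometric_eventually_less:
  fixes C D e :: real
  assumes "0 \<le> D" "D < 1" "0 < e"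
  shows "eventually (\<lambda>n. C * D ^ n < e) sequentially"
proof -
  have "(\<lambda>n. C * D ^ n) \<longlonglongrightarrow> C * 0"
    using assms by (intro tendsto_mult tendsto_const LIMSEQ_power_zero) auto
  then show ?thesis using assms(3) by (simp add: order_tendstoD(2))
qed

lemma exists_inverse_power_less:
  assumes "1 < p" and "(0::real) < e"
  shows "\<exists>k. inverse (real p ^ k) < e"
proof -
  have "inverse (real p) < 1" using assms(1) by (simp add: inverse_less_1_iff)
  then obtain k where "inverse (real p) ^ k < e" using real_arch_pow_inv[OF assms(2)] by blast
  then show ?thesis by (metis power_inverse)
qed

lemma interpolated_value_in_seq_closure:
  assumes p: "0 < p" and K: "padic_extension p iota absK" and s: "\<And>n. s n \<in> zp p"
    and x: "x \<in> zp p" and y: "y \<in> zp p" and g: "zp_continuous p absK g" and xy: "iota x = g y"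
    and D: "0 \<le> D" "D < 1"
    and approx: "\<And>n. n \<in> N \<Longrightarrow> absK (iota (s n) - g (zp_of_nat p n)) \<le> C * D ^ n"
    and dense: "\<And>b. infinite {n \<in> N. int n mod int p ^ b = y b}"
  shows "x \<in> zp_seq_closure p s"
  unfolding zp_seq_closure_def
proof (intro CollectI conjI allI x)
  fix a
  define e where "e = inverse (real p ^ a) / 2"
  have e: "e > 0" using p unfolding e_def by simp
  obtain b where b: "\<And>z. z \<in> zp p \<Longrightarrow> z b = y b \<Longrightarrow> absK (g z - g y) < e"
    using g y e unfolding zp_continuous_def by blast
  obtain n where n: "n \<in> N" "int n mod int p ^ b = y b" and small: "C * D ^ n < e"
    using exists_in_infinite_eventually[OF dense geometric_eventually_less[OF D e]] by blast
  have "absK (iota (s n) - iota x)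
      \<le> absK (iota (s n) - g (zp_of_nat p n)) + absK (g (zp_of_nat p n) - g y)"
    unfolding xy by (rule abs_triangle_diff[OF p K])
  also have "\<dots> < inverse (real p ^ a)"
    using approx[OF n(1)] small b[OF zp_of_nat_in_zp[OF p]] n(2) unfolding e_def
    by (fastforce simp: zp_of_nat_def)
  finally show "\<exists>n. x a = s n a" using eq_if_abs_iota_diff_less[OF p K s x] by metis
qed

lemma seq_closure_point_interpolated:
  assumes p: "1 < p" and K: "padic_extension p iota absK" and s: "\<And>n. s n \<in> zp p"
    and x: "x \<in> zp p" and y: "y \<in> zp p" and g: "zp_continuous p absK g"
    and D: "0 \<le> D" "D < 1"
    and approx: "\<And>n. n \<in> N \<Longrightarrow> absK (iota (s n) - g (zp_of_nat p n)) \<le> C * D ^ n"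
    and cluster: "\<And>k b. infinite {n \<in> N. s n k = x k \<and> int n mod int p ^ b = y b}"
  shows "iota x = g y"
proof -
  have p0: "0 < p" using p by simp
  show ?thesis
  proof (rule eq_if_abs_diff_small[OF p0 K])
    fix e' :: real assume "e' > 0"
    define e where "e = e' / 3"
    have e: "e > 0" using \<open>e' > 0\<close> unfolding e_def by simp
    obtain b where b: "\<And>z. z \<in> zp p \<Longrightarrow> z b = y b \<Longrightarrow> absK (g z - g y) < e"
      using g y e unfolding zp_continuous_def by blast
    obtain k where k: "inverse (real p ^ k) < e" using exists_inverse_power_less[OF p e] by blast
    obtain n where n: "n \<in> N" "s n k = x k" "int n mod int p ^ b = y b" and small: "C * D ^ n < e"
      using exists_in_infinite_eventually[OF cluster geometric_eventually_less[OF D e]] by blast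
    have "absK (iota x - g y) \<le> absK (iota x - iota (s n)) + absK (iota (s n) - g y)"
      by (rule abs_triangle_diff[OF p0 K])
    also have "\<dots> \<le> absK (iota x - iota (s n)) + (absK (iota (s n) - g (zp_of_nat p n))
        + absK (g (zp_of_nat p n) - g y))"
      using abs_triangle_diff[OF p0 K] by simp
    also have "\<dots> < e'"
      using abs_iota_diff_le[OF p0 K x s n(2)[symmetric]] k approx[OF n(1)] small
        b[OF zp_of_nat_in_zp[OF p0]] n(3) unfolding e_def
      by (fastforce simp: zp_of_nat_def)
    finally show "absK (iota x - g y) < e'" .
  qed
qed

lemma infinite_agreeing_indices:
  assumes s: "\<And>n. s n \<in> zp p" and x: "x \<in> zp_seq_closure p s" and nx: "x \<notin> range s"
  shows "infinite {n. s n k = x k}"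
proof
  assume fin: "finite {n. s n k = x k}"
  have xz: "x \<in> zp p" and xa: "\<And>a. \<exists>n. x a = s n a" using x unfolding zp_seq_closure_def by auto
  have "\<forall>n. \<exists>a. s n a \<noteq> x a" using nx by (metis ext rangeI)
  then obtain af where af: "\<And>n. s n (af n) \<noteq> x (af n)" by metis
  \<comment> \<open>a level deep enough to separate x from each of the finitely many candidates\<close>
  define a where "a = k + (\<Sum>n | s n k = x k. af n)"
  obtain m where m: "x a = s m a" using xa by blast
  have agree: "s m j = x j" if "j \<le> a" for j
    using zp_mod_eq[OF s that, of m] zp_mod_eq[OF xz that] m by simp
  then have "m \<in> {n. s n k = x k}" unfolding a_def by simp
  then have "af m \<le> a" unfolding a_def using fin by (simp add: member_le_sum trans_le_add2)
  then show False using agree af by blast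
qed

locale twisted_interpolation =
  fixes p f q e :: nat and iota :: "(nat \<Rightarrow> int) \<Rightarrow> 'k::field" and absK :: "'k \<Rightarrow> real"
    and s :: "nat \<Rightarrow> nat \<Rightarrow> int" and sir :: "nat \<Rightarrow> nat \<Rightarrow> (nat \<Rightarrow> int) \<Rightarrow> 'k"
    and A :: "nat \<Rightarrow> nat \<Rightarrow> nat set" and C D :: real
  assumes p: "1 < p" and f: "1 \<le> f" and q: "q = p ^ e" and K: "padic_extension p iota absK"
    and A_eq: "\<And>i r. A i r = {m. m mod (p ^ f - 1) = i \<and> m mod q = r}"
    and s_zp: "\<And>n. s n \<in> zp p"
    and sir_cont: "\<And>i r. i < p ^ f - 1 \<Longrightarrow> r < q \<Longrightarrow> zp_continuous p absK (sir i r)"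
    and D: "0 \<le> D" "D < 1"
    and approx: "\<And>i r n. i < p ^ f - 1 \<Longrightarrow> r < q \<Longrightarrow> n \<in> A i r \<Longrightarrow>
      absK (iota (s n) - sir i r (zp_of_nat p n)) \<le> C * D ^ n"
begin

lemma p_pos: "0 < p"
  using p by simp

lemma mod_q_eq_if_mod_power:
  assumes y: "y \<in> zp p" and ye: "y e = int r" and "e \<le> b" and n: "int n mod int p ^ b = y b"
  shows "n mod q = r"
proof -
  have "int n mod int p ^ e = int r" using int_mod_power_lower[OF y \<open>e \<le> b\<close> n] ye by simp
  then have "int (n mod q) = int r" by (simp add: q of_nat_mod)
  then show ?thesis by simp
qed

lemma interpolated_value_in_closure:
  assumes x: "x \<in> zp p" and i: "i < p ^ f - 1" and r: "r < q"
    and y: "y \<in> zp_coset p r q" and xy: "iota x = sir i r y"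
  shows "x \<in> zp_seq_closure p s"
proof -
  have yz: "y \<in> zp p" and ye: "y e = int r" using y zp_coset_iff[OF p_pos q r] by auto
  show ?thesis
  proof (rule interpolated_value_in_seq_closure[OF p_pos K s_zp x yz sir_cont[OF i r] xy D
        approx[OF i r]])
    fix b
    let ?B = "max b e"
    have "n \<in> A i r \<and> int n mod int p ^ b = y b"
      if "n mod (p ^ f - 1) = i" "int n mod int p ^ ?B = y ?B" for n
      using that int_mod_power_lower[OF yz _ that(2)] mod_q_eq_if_mod_power[OF yz ye _ that(2)]
      by (simp add: A_eq)
    then have "{n. n mod (p ^ f - 1) = i \<and> int n mod int p ^ ?B = y ?B}
        \<subseteq> {n \<in> A i r. int n mod int p ^ b = y b}" by blast
    then show "infinite {n \<in> A i r. int n mod int p ^ b = y b}"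
      using infinite_residue_class_in_ball[OF p_pos f i yz] infinite_super by blast
  qed
qed

lemma closure_point_interpolated:
  assumes x: "x \<in> zp_seq_closure p s" and nx: "x \<notin> range s"
  shows "\<exists>i<p ^ f - 1. \<exists>r<q. \<exists>y\<in>zp_coset p r q. iota x = sir i r y"
proof -
  have xz: "x \<in> zp p" using x unfolding zp_seq_closure_def by simp
  define F where "F k = {n. s n k = x k}" for k
  have dec: "F (Suc k) \<subseteq> F k" for k
  proof
    fix n assume "n \<in> F (Suc k)"
    then show "n \<in> F k" using zp_memD[OF s_zp, of n k] zp_memD[OF xz, of k] by (simp add: F_def)
  qed
  have inf: "infinite (F k)" for k
    unfolding F_def by (rule infinite_agreeing_indices[OF s_zp x nx])
  have cover: "F k \<subseteq> (\<Union>ir\<in>{..<p ^ f - 1} \<times> {..<q}. case_prod A ir)" for k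
  proof
    fix n
    have "1 < p ^ f" using one_less_power[OF p, of f] f by simp
    moreover have "0 < q" using q p by simp
    ultimately have "(n mod (p ^ f - 1), n mod q) \<in> {..<p ^ f - 1} \<times> {..<q}" by simp
    moreover have "n \<in> case_prod A (n mod (p ^ f - 1), n mod q)" by (simp add: A_eq)
    ultimately show "n \<in> (\<Union>ir\<in>{..<p ^ f - 1} \<times> {..<q}. case_prod A ir)" by blast
  qed
  obtain ir where ir: "ir \<in> {..<p ^ f - 1} \<times> {..<q}" and "\<And>k. infinite (F k \<inter> case_prod A ir)"
    using decreasing_infinite_pigeonhole[of F "{..<p ^ f - 1} \<times> {..<q}" "case_prod A"] dec inf cover
    by blast
  then obtain i r where i: "i < p ^ f - 1" and r: "r < q" and inf_ir: "\<And>k. infinite (F k \<inter> A i r)"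
    by (cases ir) auto
  obtain y where yz: "y \<in> zp p"
    and cluster: "\<And>k b. infinite {n \<in> F k \<inter> A i r. int n mod int p ^ b = y b}"
    using exists_zp_cluster_point[OF p_pos, of "\<lambda>k. F k \<inter> A i r"] dec inf_ir by blast
  obtain n where n: "n \<in> F 0 \<inter> A i r" "int n mod int p ^ e = y e"
    using not_finite_existsD[OF cluster[of 0 e]] by blast
  then have "int (n mod q) = y e" by (simp add: q of_nat_mod)
  moreover have "n mod q = r" using n(1) by (simp add: A_eq)
  ultimately have "y e = int r" by simp
  then have y: "y \<in> zp_coset p r q" using zp_coset_iff[OF p_pos q r] yz by simp
  have "{n \<in> A i r. s n k = x k \<and> int n mod int p ^ b = y b}
      = {n \<in> F k \<inter> A i r. int n mod int p ^ b = y b}" for k b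
    by (auto simp: F_def)
  then have "iota x = sir i r y"
    using seq_closure_point_interpolated[OF p K s_zp xz yz sir_cont[OF i r] D approx[OF i r]] cluster
    by simp
  with i r y show ?thesis by blast
qed

end

locale zp_haar_measure =
  fixes p :: nat and M :: "(nat \<Rightarrow> int) measure"
  assumes p: "1 < p" and space_eq: "space M = zp p"
    and sets_eq: "sets M = sigma_sets (zp p) {zp_ball p m a | m a. m \<in> zp p}"
    and emeasure_ball: "\<And>m a. m \<in> zp p \<Longrightarrow> emeasure M (zp_ball p m a) = ennreal (inverse (real p ^ a))"
begin

lemma zp_ball_in_sets: "m \<in> zp p \<Longrightarrow> zp_ball p m a \<in> sets M"
  unfolding sets_eq by (auto intro: sigma_sets.Basic)

sublocale finite_measure M
proof
  have "zp_ball p (zp_of_nat p 0) 0 = zp p"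
    unfolding zp_ball_def zp_of_nat_def by (auto simp: zp_at_0)
  moreover have "zp_of_nat p 0 \<in> zp p" using p by (intro zp_of_nat_in_zp) simp
  ultimately show "emeasure M (space M) \<noteq> \<infinity>"
    using emeasure_ball[of "zp_of_nat p 0" 0] by (simp add: space_eq)
qed

lemma singleton_null:
  assumes x: "x \<in> zp p"
  shows "{x} \<in> null_sets M"
proof -
  have sx: "{x} = (\<Inter>a. zp_ball p x a)"
  proof (intro equalityI subsetI)
    fix y assume "y \<in> (\<Inter>a. zp_ball p x a)"
    then have "y a = x a" for a by (simp add: zp_ball_def)
    then show "y \<in> {x}" by (simp add: fun_eq_iff)
  qed (use x in \<open>simp add: zp_ball_def\<close>)
  then have sets: "{x} \<in> sets M" using zp_ball_in_sets[OF x] by auto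
  have le: "measure M {x} \<le> inverse (real p ^ a)" for a
  proof -
    have "measure M {x} \<le> measure M (zp_ball p x a)"
      using zp_ball_in_sets[OF x] sx by (intro finite_measure_mono) auto
    also have "\<dots> = inverse (real p ^ a)" using emeasure_ball[OF x, of a] by (simp add: emeasure_eq_measure)
    finally show ?thesis .
  qed
  have "measure M {x} \<le> 0"
  proof (rule field_le_epsilon)
    fix \<epsilon> :: real assume "0 < \<epsilon>"
    then obtain a where "inverse (real p ^ a) < \<epsilon>" using exists_inverse_power_less[OF p] by blast
    then show "measure M {x} \<le> 0 + \<epsilon>" using le[of a] by simp
  qed
  then have "measure M {x} = 0" by (simp add: measure_nonneg antisym)
  then show ?thesis using sets by (simp add: emeasure_eq_measure null_sets_def)
qed

lemma measure_eq_if_countable_diff: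
  assumes S: "S \<in> sets M" and "T \<subseteq> S" and "countable (S - T)"
  shows "measure M T = measure M S"
proof -
  have "S - T \<subseteq> zp p" using sets.sets_into_space[OF S] space_eq by auto
  then have "(\<Union>x\<in>S - T. {x}) \<in> null_sets M"
    using \<open>countable (S - T)\<close> singleton_null by (intro null_sets_UN') auto
  then have "measure M (S - (S - T)) = measure M S" using measure_Diff_null_set[OF S] by simp
  moreover have "S - (S - T) = T" using \<open>T \<subseteq> S\<close> by auto
  ultimately show ?thesis by simp
qed

context
  fixes s :: "nat \<Rightarrow> nat \<Rightarrow> int"
  assumes s: "\<And>n. s n \<in> zp p"
begin

lemma level_set_eq_Union_balls: "{x \<in> zp p. \<exists>n. x a = s n a} = (\<Union>n. zp_ball p (s n) a)"
  unfolding zp_ball_def by auto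

lemma level_set_in_sets: "{x \<in> zp p. \<exists>n. x a = s n a} \<in> sets M"
  unfolding level_set_eq_Union_balls using zp_ball_in_sets[OF s] by auto

lemma measure_level_set:
  "measure M {x \<in> zp p. \<exists>n. x a = s n a} = real (card (range (\<lambda>n. s n a))) / real p ^ a"
proof -
  let ?V = "range (\<lambda>n. s n a)" and ?B = "\<lambda>v. {x \<in> zp p. x a = v}"
  have ball: "?B v \<in> sets M" "emeasure M (?B v) = ennreal (inverse (real p ^ a))" if "v \<in> ?V" for v
  proof -
    from that obtain n where "v = s n a" by blast
    then have "?B v = zp_ball p (s n) a" unfolding zp_ball_def by simp
    then show "?B v \<in> sets M" "emeasure M (?B v) = ennreal (inverse (real p ^ a))"
      using zp_ball_in_sets[OF s] emeasure_ball[OF s] by simp_all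
  qed
  have fin: "finite ?V"
  proof (rule finite_subset)
    show "?V \<subseteq> {0..<int p ^ a}" using zp_memD[OF s] by auto
  qed simp
  have disj: "disjoint_family_on ?B ?V" by (auto simp: disjoint_family_on_def)
  have "{x \<in> zp p. \<exists>n. x a = s n a} = (\<Union>v\<in>?V. ?B v)" by auto
  then have "emeasure M {x \<in> zp p. \<exists>n. x a = s n a} = (\<Sum>v\<in>?V. emeasure M (?B v))"
    using fin disj ball(1) by (simp only:) (intro sum_emeasure[symmetric], auto)
  also have "\<dots> = (\<Sum>v\<in>?V. ennreal (inverse (real p ^ a)))"
    by (rule sum.cong) (simp_all only: ball(2))
  also have "\<dots> = ennreal (real (card ?V) / real p ^ a)"
    by (simp add: ennreal_of_nat_eq_real_of_nat ennreal_mult' divide_inverse)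
  finally show ?thesis by (simp add: emeasure_eq_measure)
qed

lemma seq_closure_eq_Inter_level_sets:
  "zp_seq_closure p s = (\<Inter>a. {x \<in> zp p. \<exists>n. x a = s n a})"
  unfolding zp_seq_closure_def by auto

lemma seq_closure_in_sets: "zp_seq_closure p s \<in> sets M"
  unfolding seq_closure_eq_Inter_level_sets using level_set_in_sets by auto

lemma tendsto_card_residues_measure_seq_closure:
  "(\<lambda>a. real (card (range (\<lambda>n. s n a))) / real p ^ a) \<longlonglongrightarrow> measure M (zp_seq_closure p s)"
proof -
  define L where "L a = {x \<in> zp p. \<exists>n. x a = s n a}" for a
  have "decseq L"
  proof (rule decseq_SucI, intro subsetI)
    fix a x assume "x \<in> L (Suc a)"
    then obtain n where "x \<in> zp p" "x (Suc a) = s n (Suc a)" by (auto simp: L_def)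
    then have "x \<in> zp p" "x a = s n a" using zp_memD[of x p a] zp_memD[OF s, of n a] by auto
    then show "x \<in> L a" by (auto simp: L_def)
  qed
  then have "(\<lambda>a. measure M (L a)) \<longlonglongrightarrow> measure M (\<Inter>a. L a)"
    using level_set_in_sets unfolding L_def by (intro finite_Lim_measure_decseq) auto
  then show ?thesis using measure_level_set by (simp add: L_def seq_closure_eq_Inter_level_sets)
qed

end

end

theorem theorem4p3:
  fixes p f q :: nat
    and iota :: "(nat \<Rightarrow> int) \<Rightarrow> 'k::field"
    and absK :: "'k \<Rightarrow> real"
    and s :: "nat \<Rightarrow> (nat \<Rightarrow> int)"
    and sir :: "nat \<Rightarrow> nat \<Rightarrow> (nat \<Rightarrow> int) \<Rightarrow> 'k"
    and A :: "nat \<Rightarrow> nat \<Rightarrow> nat set"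
    and M :: "(nat \<Rightarrow> int) measure"
  assumes p: "prime p" and f: "f \<ge> 1" and q: "\<exists>e. q = p ^ e"
    and K: "padic_extension p iota absK"
    and A_def: "\<And>i r. A i r = {m. m mod (p ^ f - 1) = i \<and> m mod q = r}"
    and s_zp: "\<And>n. s n \<in> zp p"
    and sir_cont: "\<And>i r. i \<le> p ^ f - 2 \<Longrightarrow> r \<le> q - 1 \<Longrightarrow> zp_continuous p absK (sir i r)"
    and interp: "\<exists>C D::real. C \<ge> 0 \<and> 0 \<le> D \<and> D < 1 \<and>
        (\<forall>i r n. i \<le> p ^ f - 2 \<longrightarrow> r \<le> q - 1 \<longrightarrow> n \<in> A i r \<longrightarrow>
            absK (iota (s n) - sir i r (zp_of_nat p n)) \<le> C * D ^ n)"
    and M_space: "space M = zp p"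
    and M_sets: "sets M = sigma_sets (zp p) {zp_ball p m a | m a. m \<in> zp p}"
    and M_haar: "\<And>m a. m \<in> zp p \<Longrightarrow> emeasure M (zp_ball p m a) = ennreal (inverse (real p ^ a))"
  shows "(\<lambda>a. real (card ((\<lambda>n. s n a) ` UNIV)) / real p ^ a)
           \<longlonglongrightarrow> measure M (zp p \<inter> (\<Union>i\<in>{0..p ^ f - 2}. \<Union>r\<in>{0..q - 1}.
                 {x. \<exists>y\<in>zp_coset p r q. iota x = sir i r y}))"
proof -
  have p1: "1 < p" using prime_gt_1_nat[OF p] .
  obtain e where e: "q = p ^ e" using q by blast
  obtain C D :: real where D: "0 \<le> D" "D < 1" and approx: "\<forall>i r n. i \<le> p ^ f - 2 \<longrightarrow> r \<le> q - 1
      \<longrightarrow> n \<in> A i r \<longrightarrow> absK (iota (s n) - sir i r (zp_of_nat p n)) \<le> C * D ^ n"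
    using interp by blast
  have "1 < p ^ f" "0 < q" using one_less_power[OF p1, of f] f e p1 by simp_all
  then have i_range: "{0..p ^ f - 2} = {..<p ^ f - 1}" and r_range: "{0..q - 1} = {..<q}" by auto
  interpret zp_haar_measure p M using p1 M_space M_sets M_haar by unfold_locales
  interpret twisted_interpolation p f q e iota absK s sir A C D
    using p1 f e K A_def s_zp sir_cont D approx by unfold_locales (auto simp: i_range r_range)
  define T where "T = zp p \<inter> (\<Union>i<p ^ f - 1. \<Union>r<q. {x. \<exists>y\<in>zp_coset p r q. iota x = sir i r y})"
  have "T \<subseteq> zp_seq_closure p s"
    using interpolated_value_in_closure by (auto simp: T_def)
  moreover have "zp_seq_closure p s - T \<subseteq> range s"
  proof
    fix x assume x: "x \<in> zp_seq_closure p s - T"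
    show "x \<in> range s"
    proof (rule ccontr)
      assume "x \<notin> range s"
      then obtain i r y where "i < p ^ f - 1" "r < q" "y \<in> zp_coset p r q" "iota x = sir i r y"
        using closure_point_interpolated x by blast
      then have "x \<in> T" using x by (auto simp: zp_seq_closure_def T_def)
      with x show False by blast
    qed
  qed
  then have "countable (zp_seq_closure p s - T)" by (rule countable_subset) simp
  ultimately have "measure M T = measure M (zp_seq_closure p s)"
    by (intro measure_eq_if_countable_diff seq_closure_in_sets[of s, OF s_zp])
  then show ?thesis
    using tendsto_card_residues_measure_seq_closure[of s, OF s_zp] unfolding T_def i_range r_range by simp
qed

end
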